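(* Let $M$ be a closed, connected, oriented smooth $4m$-manifold and $\Phi\colon H^*(M;\mathbb R)\to\wedge^*\mathbb R^{4m}$ an injective homomorphism of graded algebras (cup product to exterior product) whose image is closed under the Euclidean Clifford product $\cdot$ of $\wedge^*\mathbb R^{4m}$. Let $\Lambda_{2m}=\Phi(H^{2m}(M;\mathbb R))$. Then $\Lambda_{2m}$ is closed under the Hodge star $*$ of $\wedge^{2m}\mathbb R^{4m}$, so $\Lambda_{2m}=\Lambda^+_{2m}\oplus\Lambda^-_{2m}$ with $\Lambda^\pm_{2m}$ the $\pm1$-eigenspaces of $*$ in $\Lambda_{2m}$; and the map $P\colon\wedge^{2m}\mathbb R^{4m}\times\wedge^{2m}\mathbb R^{4m}\to\wedge^{2m}\mathbb R^{4m}$, $P(v,v')=\langle v\cdot v'\rangle_{2m}$, satisfies $P(\Lambda^+_{2m}\times\Lambda^+_{2m})\subset\Lambda^+_{2m}$ and $P(\Lambda^-_{2m}\times\Lambda^-_{2m})\subset\Lambda^-_{2m}$.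
   Context: The Euclidean Clifford product on $\wedge^*\mathbb R^{N}$: the Clifford algebra of $(\mathbb R^N,\text{standard inner product})$ identified with $\wedge^*\mathbb R^N$ via $e_{i_1}\cdots e_{i_k}\leftrightarrow e_{i_1}\wedge\dots\wedge e_{i_k}$ ($i_1<\dots<i_k$), with $e_i\cdot e_i=1$ and $e_i\cdot e_j=-e_j\cdot e_i$ for $i\ne j$. $\langle\xi\rangle_k$ denotes the degree-$k$ component. *)

theory Defs
  imports "HOL-Analysis.Analysis"
begin

text \<open>A multivector in the exterior algebra of R^n (basis e_0,...,e_{n-1}) is a
coefficient function on index sets: x S is the coefficient of the basis blade
e_{i_1} wedge ... wedge e_{i_k}, where S = {i_1 < ... < i_k}.\<close>

type_synonym mvec = "nat set \<Rightarrow> real"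

definition is_mvec :: "nat \<Rightarrow> mvec \<Rightarrow> bool" where
  "is_mvec n x \<longleftrightarrow> (\<forall>S. x S \<noteq> 0 \<longrightarrow> S \<subseteq> {..<n})"

text \<open>Sign of reordering the concatenation e_S e_T into increasing order
(number of inversions i in S, j in T with j < i).\<close>
definition cl_sign :: "nat set \<Rightarrow> nat set \<Rightarrow> real" where
  "cl_sign S T = (-1) ^ card {(i, j). i \<in> S \<and> j \<in> T \<and> j < i}"

text \<open>Euclidean Clifford product: e_S . e_T = cl_sign S T e_{S symdiff T}
(from e_i e_i = 1 and e_i e_j = - e_j e_i for i \<noteq> j).\<close>
definition clifford :: "nat \<Rightarrow> mvec \<Rightarrow> mvec \<Rightarrow> mvec" where
  "clifford n x y = (\<lambda>U. if U \<subseteq> {..<n}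
      then (\<Sum>S\<in>Pow {..<n}. cl_sign S ((S - U) \<union> (U - S)) * x S * y ((S - U) \<union> (U - S)))
      else 0)"

text \<open>Exterior (wedge) product: e_S wedge e_T = cl_sign S T e_{S union T} if S, T disjoint, else 0.\<close>
definition wedge :: "nat \<Rightarrow> mvec \<Rightarrow> mvec \<Rightarrow> mvec" where
  "wedge n x y = (\<lambda>U. if U \<subseteq> {..<n}
      then (\<Sum>S\<in>Pow U. cl_sign S (U - S) * x S * y (U - S))
      else 0)"

definition mv_one :: mvec where
  "mv_one = (\<lambda>S. if S = {} then 1 else 0)"

definition grade :: "nat \<Rightarrow> mvec \<Rightarrow> mvec" where
  "grade k x = (\<lambda>S. if card S = k then x S else 0)"

definition homogeneous :: "nat \<Rightarrow> nat \<Rightarrow> mvec \<Rightarrow> bool" where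
  "homogeneous n k x \<longleftrightarrow> is_mvec n x \<and> (\<forall>S. x S \<noteq> 0 \<longrightarrow> card S = k)"

text \<open>Euclidean Hodge star on the exterior algebra of R^n (standard orientation
e_0 wedge ... wedge e_{n-1}), characterised by a wedge (star b) = <a,b> vol:
star e_S = cl_sign S S^c e_{S^c}.\<close>
definition hodge :: "nat \<Rightarrow> mvec \<Rightarrow> mvec" where
  "hodge n x = (\<lambda>U. if U \<subseteq> {..<n}
      then cl_sign ({..<n} - U) U * x ({..<n} - U) else 0)"

text \<open>We model
H^*(M;R) abstractly by a real algebra 'h with grading Hk k (the subspace
H^k(M;R)), recording the standard algebraic properties of the real cohomology
of a closed, connected, oriented n-manifold: finite-dimensional graded pieces,
vanishing above n, direct sum decomposition, graded-commutative cup product,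
H^0 = R (connected), H^n one-dimensional (closed + oriented), and Poincare
duality (nondegenerate cup pairing H^k x H^{n-k} -> H^n).\<close>

definition closed_oriented_manifold_cohomology ::
  "nat \<Rightarrow> (nat \<Rightarrow> 'h::real_algebra_1 set) \<Rightarrow> bool" where
  "closed_oriented_manifold_cohomology n Hk \<longleftrightarrow>
     (\<forall>k. subspace (Hk k)) \<and>
     (\<forall>k. \<exists>B. finite B \<and> span B = Hk k) \<and>
     (\<forall>k>n. Hk k = {0}) \<and>
     (\<forall>h. \<exists>c. (\<forall>k. c k \<in> Hk k) \<and> h = (\<Sum>k\<le>n. c k)) \<and>
     (\<forall>c. (\<forall>k. c k \<in> Hk k) \<and> (\<Sum>k\<le>n. c k) = 0 \<longrightarrow> (\<forall>k\<le>n. c k = 0)) \<and>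
     (\<forall>k l a b. a \<in> Hk k \<longrightarrow> b \<in> Hk l \<longrightarrow> a * b \<in> Hk (k + l)) \<and>
     (\<forall>k l a b. a \<in> Hk k \<longrightarrow> b \<in> Hk l \<longrightarrow> a * b = ((-1) ^ (k * l)) *\<^sub>R (b * a)) \<and>
     Hk 0 = range of_real \<and>
     dim (Hk n) = 1 \<and>
     (\<forall>k\<le>n. \<forall>a\<in>Hk k. a \<noteq> 0 \<longrightarrow> (\<exists>b\<in>Hk (n - k). a * b \<noteq> 0))"

definition graded_alg_embedding ::
  "nat \<Rightarrow> (nat \<Rightarrow> 'h::real_algebra_1 set) \<Rightarrow> ('h \<Rightarrow> mvec) \<Rightarrow> bool" where
  "graded_alg_embedding n Hk \<Phi> \<longleftrightarrow>
     (\<forall>a b. \<Phi> (a + b) = (\<lambda>S. \<Phi> a S + \<Phi> b S)) \<and>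
     (\<forall>r a. \<Phi> (r *\<^sub>R a) = (\<lambda>S. r * \<Phi> a S)) \<and>
     inj \<Phi> \<and>
     (\<forall>a b. \<Phi> (a * b) = wedge n (\<Phi> a) (\<Phi> b)) \<and>
     \<Phi> 1 = mv_one \<and>
     (\<forall>k. \<forall>a\<in>Hk k. homogeneous n k (\<Phi> a))"

end

theory Submission
  imports Defs
begin

text \<open>
  For a homogeneous k-vector x in dimension n, the Hodge star is right Clifford multiplication
  by the volume element, up to the sign (-1)^(k choose 2). The volume element spans the image of
  the top cohomology, so the Clifford closure of the image makes the middle-degree part closed
  under the star, on which the star is an involution; this gives the eigenspace splitting.
  Right multiplication by the volume element associates with the Clifford product and maps
  degree k to degree n - k, hence star of the degree-2m part of v w is the degree-2m part of
  v (star w). Therefore w = star w, resp. w = - star w, passes to the degree-2m part of v w.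
\<close>

definition inversions :: "nat set \<Rightarrow> nat set \<Rightarrow> nat" where
  "inversions A B = card {(i, j). i \<in> A \<and> j \<in> B \<and> j < i}"

lemma cl_sign_inversions: "cl_sign A B = (-1) ^ inversions A B"
  by (simp add: cl_sign_def inversions_def)

lemma finite_inversion_pairs:
  "finite A \<Longrightarrow> finite B \<Longrightarrow> finite {(i, j). i \<in> A \<and> j \<in> B \<and> P i j}"
  by (rule finite_subset[of _ "A \<times> B"]) auto

lemma inversions_Un_left:
  assumes "finite A" "finite A'" "finite B" "A \<inter> A' = {}"
  shows "inversions (A \<union> A') B = inversions A B + inversions A' B"
proof -
  have "{(i, j). i \<in> A \<union> A' \<and> j \<in> B \<and> j < i} =
        {(i, j). i \<in> A \<and> j \<in> B \<and> j < i} \<union> {(i, j). i \<in> A' \<and> j \<in> B \<and> j < i}"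
    by auto
  then show ?thesis
    unfolding inversions_def using assms
    by (simp add: card_Un_disjoint finite_inversion_pairs disjoint_iff)
qed

lemma inversions_Un_right:
  assumes "finite A" "finite B" "finite B'" "B \<inter> B' = {}"
  shows "inversions A (B \<union> B') = inversions A B + inversions A B'"
proof -
  have "{(i, j). i \<in> A \<and> j \<in> B \<union> B' \<and> j < i} =
        {(i, j). i \<in> A \<and> j \<in> B \<and> j < i} \<union> {(i, j). i \<in> A \<and> j \<in> B' \<and> j < i}"
    by auto
  then show ?thesis
    unfolding inversions_def using assms
    by (simp add: card_Un_disjoint finite_inversion_pairs disjoint_iff)
qed

lemma inversions_add_swap:
  assumes "finite A" "finite B"
  shows "inversions A B + inversions B A + card (A \<inter> B) = card A * card B"
proof -
  define P1 where "P1 = {(i, j). i \<in> A \<and> j \<in> B \<and> j < i}"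
  define P2 where "P2 = {(i, j). i \<in> A \<and> j \<in> B \<and> i < j}"
  define P3 where "P3 = {(i, j). i \<in> A \<and> j \<in> B \<and> i = j}"
  have fin: "finite P1" "finite P2" "finite P3"
    unfolding P1_def P2_def P3_def using finite_inversion_pairs assms by auto
  have "A \<times> B = (P1 \<union> P2) \<union> P3"
    unfolding P1_def P2_def P3_def by auto
  then have "card (A \<times> B) = card P1 + card P2 + card P3"
    using fin by (simp add: card_Un_disjoint P1_def P2_def P3_def disjoint_iff)
  moreover have "card P1 = inversions A B"
    unfolding P1_def inversions_def ..
  moreover have "P2 = prod.swap ` {(i, j). i \<in> B \<and> j \<in> A \<and> j < i}"
    unfolding P2_def by force
  then have "card P2 = inversions B A"
    unfolding inversions_def by (simp add: card_image)
  moreover have "P3 = (\<lambda>i. (i, i)) ` (A \<inter> B)"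
    unfolding P3_def by auto
  then have "card P3 = card (A \<inter> B)"
    by (simp add: card_image inj_on_def)
  ultimately show ?thesis
    by (simp add: card_cartesian_product)
qed

lemma cl_sign_Un_left:
  "\<lbrakk>finite A; finite A'; finite B; A \<inter> A' = {}\<rbrakk>
   \<Longrightarrow> cl_sign (A \<union> A') B = cl_sign A B * cl_sign A' B"
  by (simp add: cl_sign_inversions inversions_Un_left power_add)

lemma cl_sign_Un_right:
  "\<lbrakk>finite A; finite B; finite B'; B \<inter> B' = {}\<rbrakk>
   \<Longrightarrow> cl_sign A (B \<union> B') = cl_sign A B * cl_sign A B'"
  by (simp add: cl_sign_inversions inversions_Un_right power_add)

lemma cl_sign_square: "cl_sign A B * cl_sign A B = 1"
  by (simp add: cl_sign_def power_add[symmetric])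

lemma cl_sign_symdiff_left:
  assumes "finite A" "finite B" "finite C"
  shows "cl_sign ((A - B) \<union> (B - A)) C = cl_sign A C * cl_sign B C"
proof -
  have "cl_sign ((A - B) \<union> (A \<inter> B)) C = cl_sign (A - B) C * cl_sign (A \<inter> B) C"
    using assms by (intro cl_sign_Un_left) auto
  moreover have "cl_sign ((B - A) \<union> (A \<inter> B)) C = cl_sign (B - A) C * cl_sign (A \<inter> B) C"
    using assms by (intro cl_sign_Un_left) auto
  moreover have "cl_sign ((A - B) \<union> (B - A)) C = cl_sign (A - B) C * cl_sign (B - A) C"
    using assms by (intro cl_sign_Un_left) auto
  moreover have "(A - B) \<union> (A \<inter> B) = A" "(B - A) \<union> (A \<inter> B) = B"
    by auto
  ultimately show ?thesis
    by (simp add: cl_sign_square mult_ac)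
qed

lemma cl_sign_symdiff_right:
  assumes "finite A" "finite B" "finite C"
  shows "cl_sign A ((B - C) \<union> (C - B)) = cl_sign A B * cl_sign A C"
proof -
  have "cl_sign A ((B - C) \<union> (B \<inter> C)) = cl_sign A (B - C) * cl_sign A (B \<inter> C)"
    using assms by (intro cl_sign_Un_right) auto
  moreover have "cl_sign A ((C - B) \<union> (B \<inter> C)) = cl_sign A (C - B) * cl_sign A (B \<inter> C)"
    using assms by (intro cl_sign_Un_right) auto
  moreover have "cl_sign A ((B - C) \<union> (C - B)) = cl_sign A (B - C) * cl_sign A (C - B)"
    using assms by (intro cl_sign_Un_right) auto
  moreover have "(B - C) \<union> (B \<inter> C) = B" "(C - B) \<union> (B \<inter> C) = C"
    by auto
  ultimately show ?thesis
    by (simp add: cl_sign_square mult_ac)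
qed

lemma cl_sign_self:
  assumes "finite A"
  shows "cl_sign A A = (-1) ^ (card A choose 2)"
proof -
  have "2 * inversions A A + card A = card A * card A"
    using inversions_add_swap[OF assms assms] by simp
  then have "card A * (card A - 1) = 2 * inversions A A"
    by (simp add: diff_mult_distrib2)
  then show ?thesis
    by (simp add: cl_sign_inversions choose_two)
qed

lemma cl_sign_swap:
  "\<lbrakk>finite A; finite B; A \<inter> B = {}\<rbrakk> \<Longrightarrow> cl_sign A B * cl_sign B A = (-1) ^ (card A * card B)"
  using inversions_add_swap[of A B] by (simp add: cl_sign_inversions power_add[symmetric])

definition mv_vol :: "nat \<Rightarrow> mvec" where
  "mv_vol n = (\<lambda>S. if S = {..<n} then 1 else 0)"

lemma clifford_mv_vol:
  "clifford n y (mv_vol n)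
     = (\<lambda>U. if U \<subseteq> {..<n} then cl_sign ({..<n} - U) {..<n} * y ({..<n} - U) else 0)"
proof (rule ext)
  fix U
  show "clifford n y (mv_vol n) U
     = (if U \<subseteq> {..<n} then cl_sign ({..<n} - U) {..<n} * y ({..<n} - U) else 0)"
  proof (cases "U \<subseteq> {..<n}")
    case True
    have "cl_sign S (sym_diff S U) * y S * mv_vol n (sym_diff S U)
        = (if S = {..<n} - U then cl_sign ({..<n} - U) {..<n} * y ({..<n} - U) else 0)"
      if "S \<subseteq> {..<n}" for S
    proof -
      have "sym_diff S U = {..<n} \<longleftrightarrow> S = {..<n} - U"
        using that True by blast
      then show ?thesis
        unfolding mv_vol_def by (cases "S = {..<n} - U") simp_all
    qed
    then show ?thesis
      using True by (simp add: clifford_def)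
  qed (simp add: clifford_def)
qed

text \<open>Only the multiplicativity of cl_sign in each argument with respect to symmetric
  difference enters here, so this special case of associativity needs no general sign cocycle.\<close>
lemma clifford_assoc_mv_vol:
  "clifford n (clifford n x y) (mv_vol n) = clifford n x (clifford n y (mv_vol n))"
proof (rule ext)
  fix U
  let ?N = "{..<n}"
  show "clifford n (clifford n x y) (mv_vol n) U = clifford n x (clifford n y (mv_vol n)) U"
  proof (cases "U \<subseteq> ?N")
    case True
    have "cl_sign (?N - U) ?N * (cl_sign S (sym_diff S (?N - U)) * x S * y (sym_diff S (?N - U)))
        = cl_sign S (sym_diff S U) * x S * clifford n y (mv_vol n) (sym_diff S U)"
      if S: "S \<in> Pow ?N" for S
    proof -
      define T where "T = sym_diff S (?N - U)"
      have T: "T \<subseteq> ?N" "sym_diff S U = ?N - T" "?N - (?N - T) = T" "?N - U = sym_diff S T"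
        using S True unfolding T_def by blast+
      have fin: "finite S" "finite T"
        using S T(1) finite_subset by blast+
      have "cl_sign (sym_diff S T) ?N = cl_sign S ?N * cl_sign T ?N"
        using fin by (simp add: cl_sign_symdiff_left)
      moreover have "cl_sign S (?N - T) = cl_sign S ?N * cl_sign S T"
        using fin T(1) cl_sign_symdiff_right[of S ?N T] by (simp add: Diff_mono Un_absorb2)
      ultimately have "cl_sign (sym_diff S T) ?N * (cl_sign S T * x S * y T)
          = cl_sign S (?N - T) * x S * (cl_sign T ?N * y T)"
        by (simp add: mult_ac)
      then show ?thesis
        unfolding T_def[symmetric] T(2) clifford_mv_vol T(4)[symmetric] using T(3) by simp
    qed
    note summands = this
    have "clifford n (clifford n x y) (mv_vol n) U
        = cl_sign (?N - U) ?N * (\<Sum>S\<in>Pow ?N. cl_sign S (sym_diff S (?N - U)) * x S * y (sym_diff S (?N - U)))"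
      unfolding clifford_mv_vol using True by (simp add: clifford_def)
    also have "\<dots> = (\<Sum>S\<in>Pow ?N. cl_sign S (sym_diff S U) * x S * clifford n y (mv_vol n) (sym_diff S U))"
      unfolding sum_distrib_left using summands by (rule sum.cong[OF refl])
    also have "\<dots> = clifford n x (clifford n y (mv_vol n)) U"
      using True by (simp add: clifford_def[of n x])
    finally show ?thesis .
  qed (simp add: clifford_mv_vol clifford_def)
qed

lemma clifford_scale_right: "clifford n x (\<lambda>S. r * y S) = (\<lambda>U. r * clifford n x y U)"
  by (simp add: clifford_def fun_eq_iff sum_distrib_left mult_ac)

lemma grade_scale: "grade k (\<lambda>S. r * y S) = (\<lambda>S. r * grade k y S)"
  by (simp add: grade_def fun_eq_iff)

lemma hodge_lincomb:
  "hodge n (\<lambda>S. r * x S + s * y S) = (\<lambda>U. r * hodge n x U + s * hodge n y U)"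
  by (simp add: hodge_def fun_eq_iff algebra_simps)

lemma homogeneous_grade_clifford: "homogeneous n k (grade k (clifford n x y))"
  by (simp add: homogeneous_def is_mvec_def grade_def clifford_def)

lemma grade_homogeneous: "homogeneous n k x \<Longrightarrow> grade k x = x"
  by (auto simp: homogeneous_def grade_def fun_eq_iff)

lemma card_Diff_lessThan: "U \<subseteq> {..<n} \<Longrightarrow> card ({..<n} - U) = n - card U"
  by (simp add: card_Diff_subset finite_subset)

lemma homogeneous_hodge:
  assumes "homogeneous n k x"
  shows "homogeneous n (n - k) (hodge n x)"
proof -
  have "card U = n - k" if "U \<subseteq> {..<n}" "card ({..<n} - U) = k" for U
    using that card_mono[OF finite_lessThan that(1)] by (simp add: card_Diff_lessThan)
  then show ?thesis
    using assms by (auto simp: homogeneous_def is_mvec_def hodge_def)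
qed

lemma clifford_grade_mv_vol:
  assumes "k \<le> n"
  shows "clifford n (grade k y) (mv_vol n) = grade (n - k) (clifford n y (mv_vol n))"
proof -
  have "card ({..<n} - U) = k \<longleftrightarrow> card U = n - k" if "U \<subseteq> {..<n}" for U
    using that assms card_mono[OF finite_lessThan that] by (auto simp: card_Diff_lessThan)
  then show ?thesis
    by (auto simp: clifford_mv_vol grade_def fun_eq_iff)
qed

lemma hodge_eq_clifford_mv_vol:
  assumes x: "homogeneous n k x"
  shows "hodge n x = (\<lambda>U. (-1) ^ (k choose 2) * clifford n x (mv_vol n) U)"
proof (rule ext)
  fix U
  let ?A = "{..<n} - U"
  show "hodge n x U = (-1) ^ (k choose 2) * clifford n x (mv_vol n) U"
  proof (cases "U \<subseteq> {..<n} \<and> x ?A \<noteq> 0")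
    case True
    then have "card ?A = k"
      using x by (simp add: homogeneous_def)
    moreover have "?A \<union> U = {..<n}"
      using True by blast
    ultimately have "cl_sign ?A {..<n} = (-1) ^ (k choose 2) * cl_sign ?A U"
      using True cl_sign_Un_right[of ?A ?A U] cl_sign_self[of ?A] finite_subset by fastforce
    then show ?thesis
      using True by (simp add: hodge_def clifford_mv_vol power_mult_distrib[symmetric] flip: power_add)
  qed (auto simp: hodge_def clifford_mv_vol)
qed

lemma hodge_grade_clifford:
  assumes w: "homogeneous n k w" and "k \<le> n"
  shows "hodge n (grade k (clifford n v w)) = grade (n - k) (clifford n v (hodge n w))"
proof -
  let ?c = "(-1) ^ (k choose 2) :: real"
  have "hodge n (grade k (clifford n v w))
      = (\<lambda>U. ?c * clifford n (grade k (clifford n v w)) (mv_vol n) U)"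
    by (rule hodge_eq_clifford_mv_vol[OF homogeneous_grade_clifford])
  also have "\<dots> = (\<lambda>U. ?c * grade (n - k) (clifford n v (clifford n w (mv_vol n))) U)"
    by (simp add: clifford_grade_mv_vol[OF \<open>k \<le> n\<close>] clifford_assoc_mv_vol)
  also have "\<dots> = grade (n - k) (clifford n v (hodge n w))"
    by (simp add: hodge_eq_clifford_mv_vol[OF w] clifford_scale_right grade_scale)
  finally show ?thesis .
qed

lemma hodge_hodge:
  assumes x: "homogeneous n k x"
  shows "hodge n (hodge n x) = (\<lambda>U. (-1) ^ (k * (n - k)) * x U)"
proof (rule ext)
  fix U
  show "hodge n (hodge n x) U = (-1) ^ (k * (n - k)) * x U"
  proof (cases "U \<subseteq> {..<n} \<and> x U \<noteq> 0")
    case True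
    then have "card U = k" "card ({..<n} - U) = n - k"
      using x by (auto simp: homogeneous_def card_Diff_lessThan)
    then have "cl_sign ({..<n} - U) U * cl_sign U ({..<n} - U) = (-1) ^ (k * (n - k))"
      using True cl_sign_swap[of U "{..<n} - U"] finite_subset
      by (fastforce simp: mult.commute)
    moreover have "{..<n} - ({..<n} - U) = U"
      using True by blast
    ultimately show ?thesis
      using True by (simp add: hodge_def mult.assoc[symmetric])
  qed (use x in \<open>auto simp: hodge_def homogeneous_def is_mvec_def double_diff\<close>)
qed

lemma hodge_grade_clifford_eigen:
  assumes "homogeneous n k w" "n - k = k" and w: "hodge n w = (\<lambda>S. \<epsilon> * w S)"
  shows "hodge n (grade k (clifford n v w)) = (\<lambda>S. \<epsilon> * grade k (clifford n v w) S)"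
  using hodge_grade_clifford[OF assms(1)] assms(2)
  by (simp add: w clifford_scale_right grade_scale)

lemma embedding_zero:
  assumes "graded_alg_embedding n Hk \<Phi>"
  shows "\<Phi> 0 = (\<lambda>S. 0)"
proof -
  have "\<forall>r a. \<Phi> (r *\<^sub>R a) = (\<lambda>S. r * \<Phi> a S)"
    using assms by (simp add: graded_alg_embedding_def)
  from this[rule_format, of 0 0] show ?thesis
    by simp
qed

lemma embedding_sum:
  assumes "graded_alg_embedding n Hk \<Phi>" "finite J"
  shows "\<Phi> (\<Sum>j\<in>J. f j) = (\<lambda>S. \<Sum>j\<in>J. \<Phi> (f j) S)"
  using assms(2) by induction
    (use assms(1) in \<open>simp_all add: embedding_zero[OF assms(1)] graded_alg_embedding_def\<close>)

lemma add_in_image: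
  assumes "closed_oriented_manifold_cohomology n Hk" "graded_alg_embedding n Hk \<Phi>"
    and "v \<in> \<Phi> ` Hk k" "w \<in> \<Phi> ` Hk k"
  shows "(\<lambda>S. v S + w S) \<in> \<Phi> ` Hk k"
proof -
  obtain a b where "a \<in> Hk k" "b \<in> Hk k" "v = \<Phi> a" "w = \<Phi> b"
    using assms(3,4) by blast
  moreover have "subspace (Hk k)"
    using assms(1) by (simp add: closed_oriented_manifold_cohomology_def)
  ultimately have "a + b \<in> Hk k" "\<Phi> (a + b) = (\<lambda>S. v S + w S)"
    using assms(2) by (auto simp: subspace_add graded_alg_embedding_def)
  then show ?thesis
    by (metis image_eqI)
qed

lemma scale_in_image:
  assumes "closed_oriented_manifold_cohomology n Hk" "graded_alg_embedding n Hk \<Phi>"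
    and "v \<in> \<Phi> ` Hk k"
  shows "(\<lambda>S. r * v S) \<in> \<Phi> ` Hk k"
proof -
  obtain a where "a \<in> Hk k" "v = \<Phi> a"
    using assms(3) by blast
  moreover have "subspace (Hk k)"
    using assms(1) by (simp add: closed_oriented_manifold_cohomology_def)
  ultimately have "r *\<^sub>R a \<in> Hk k" "\<Phi> (r *\<^sub>R a) = (\<lambda>S. r * v S)"
    using assms(2) by (auto simp: subspace_scale graded_alg_embedding_def)
  then show ?thesis
    by (metis image_eqI)
qed

lemma zero_in_image:
  assumes "closed_oriented_manifold_cohomology n Hk" "graded_alg_embedding n Hk \<Phi>"
  shows "(\<lambda>S. 0) \<in> \<Phi> ` Hk k"
proof -
  have "0 \<in> Hk k"
    using assms(1) by (simp add: closed_oriented_manifold_cohomology_def subspace_0)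
  then have "\<Phi> 0 \<in> \<Phi> ` Hk k"
    by (rule imageI)
  then show ?thesis
    by (simp add: embedding_zero[OF assms(2)])
qed

lemma grade_embedding_in_image:
  assumes M: "closed_oriented_manifold_cohomology n Hk" and \<Phi>: "graded_alg_embedding n Hk \<Phi>"
    and "k \<le> n"
  shows "grade k (\<Phi> c) \<in> \<Phi> ` Hk k"
proof -
  have "\<forall>h. \<exists>d. (\<forall>j. d j \<in> Hk j) \<and> h = (\<Sum>j\<le>n. d j)"
    using M by (simp add: closed_oriented_manifold_cohomology_def)
  then obtain d where d: "\<And>j. d j \<in> Hk j" and c: "c = (\<Sum>j\<le>n. d j)"
    by blast
  have hom: "homogeneous n j (\<Phi> (d j))" for j
    using \<Phi> d by (simp add: graded_alg_embedding_def)
  have "grade k (\<Phi> c) = \<Phi> (d k)"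
  proof (rule ext)
    fix S
    show "grade k (\<Phi> c) S = \<Phi> (d k) S"
    proof (cases "card S = k")
      case True
      have "(\<Sum>j\<in>{..n} - {k}. \<Phi> (d j) S) = 0"
        using hom True by (intro sum.neutral) (auto simp: homogeneous_def)
      moreover have "\<Phi> c S = \<Phi> (d k) S + (\<Sum>j\<in>{..n} - {k}. \<Phi> (d j) S)"
        unfolding c embedding_sum[OF \<Phi> finite_atMost] using \<open>k \<le> n\<close> by (simp add: sum.remove)
      ultimately show ?thesis
        using True by (simp add: grade_def)
    next
      case False
      then have "\<Phi> (d k) S = 0"
        using hom[of k] unfolding homogeneous_def by blast
      then show ?thesis
        using False by (simp add: grade_def)
    qed
  qed
  then show ?thesis
    by (rule image_eqI[OF _ d])
qed

lemma mv_vol_in_image: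
  assumes M: "closed_oriented_manifold_cohomology n Hk" and \<Phi>: "graded_alg_embedding n Hk \<Phi>"
  shows "mv_vol n \<in> \<Phi> ` Hk n"
proof -
  have "dim (Hk n) = 1"
    using M by (simp add: closed_oriented_manifold_cohomology_def)
  then have "\<not> Hk n \<subseteq> span {}"
    using dim_le_card[of "Hk n" "{}"] by (intro notI) simp
  then obtain a where a: "a \<in> Hk n" "a \<noteq> 0"
    unfolding span_empty by blast
  have "inj \<Phi>" and hom: "homogeneous n n (\<Phi> a)"
    using \<Phi> a(1) by (simp_all add: graded_alg_embedding_def)
  then have "\<Phi> a \<noteq> (\<lambda>S. 0)"
    using a(2) embedding_zero[OF \<Phi>] by (metis injD)
  then obtain S where S: "\<Phi> a S \<noteq> 0"
    by blast
  have supp: "S = {..<n}" if "\<Phi> a S \<noteq> 0" for S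
    using hom that card_subset_eq[of "{..<n}" S] unfolding homogeneous_def is_mvec_def by simp
  define r where "r = \<Phi> a {..<n}"
  have "r \<noteq> 0"
    using supp[OF S] S r_def by simp
  have "(\<lambda>S. (1 / r) * \<Phi> a S) = mv_vol n"
  proof (rule ext)
    fix T
    show "1 / r * \<Phi> a T = mv_vol n T"
      using supp[of T] \<open>r \<noteq> 0\<close> by (cases "T = {..<n}") (auto simp: mv_vol_def r_def)
  qed
  moreover have "(\<lambda>S. (1 / r) * \<Phi> a S) \<in> \<Phi> ` Hk n"
    using scale_in_image[OF M \<Phi> imageI[OF a(1)]] .
  ultimately show ?thesis
    by simp
qed

lemma grade_clifford_in_image:
  assumes M: "closed_oriented_manifold_cohomology n Hk" and \<Phi>: "graded_alg_embedding n Hk \<Phi>"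
    and cl: "\<forall>a b. \<exists>c. \<Phi> c = clifford n (\<Phi> a) (\<Phi> b)"
    and "v \<in> range \<Phi>" "w \<in> range \<Phi>" "k \<le> n"
  shows "grade k (clifford n v w) \<in> \<Phi> ` Hk k"
proof -
  obtain c where "\<Phi> c = clifford n v w"
    using cl assms(4,5) by blast
  then show ?thesis
    using grade_embedding_in_image[OF M \<Phi> \<open>k \<le> n\<close>] by metis
qed

lemma hodge_in_image:
  assumes M: "closed_oriented_manifold_cohomology n Hk" and \<Phi>: "graded_alg_embedding n Hk \<Phi>"
    and cl: "\<forall>a b. \<exists>c. \<Phi> c = clifford n (\<Phi> a) (\<Phi> b)"
    and v: "v \<in> \<Phi> ` Hk k" and "k \<le> n"
  shows "hodge n v \<in> \<Phi> ` Hk (n - k)"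
proof -
  have hom: "homogeneous n k v"
    using \<Phi> v by (auto simp: graded_alg_embedding_def)
  have "v \<in> range \<Phi>" "mv_vol n \<in> range \<Phi>"
    using v mv_vol_in_image[OF M \<Phi>] by blast+
  then have "grade (n - k) (clifford n v (mv_vol n)) \<in> \<Phi> ` Hk (n - k)"
    by (rule grade_clifford_in_image[OF M \<Phi> cl]) simp
  moreover have "hodge n v = grade (n - k) (hodge n v)"
    by (simp add: grade_homogeneous[OF homogeneous_hodge[OF hom]])
  then have "hodge n v = (\<lambda>S. (-1) ^ (k choose 2) * grade (n - k) (clifford n v (mv_vol n)) S)"
    by (simp add: hodge_eq_clifford_mv_vol[OF hom] grade_scale)
  ultimately show ?thesis
    by (simp add: scale_in_image[OF M \<Phi>])
qed

lemma hodge_eigen_split: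
  assumes add: "\<And>v w. v \<in> L \<Longrightarrow> w \<in> L \<Longrightarrow> (\<lambda>S. v S + w S) \<in> L"
    and scale: "\<And>r v. v \<in> L \<Longrightarrow> (\<lambda>S. r * v S) \<in> L"
    and v: "v \<in> L" "hodge n v \<in> L" and invol: "hodge n (hodge n v) = v"
  shows "\<exists>p\<in>{u \<in> L. hodge n u = u}. \<exists>q\<in>{u \<in> L. hodge n u = (\<lambda>S. - u S)}. v = (\<lambda>S. p S + q S)"
proof -
  define p where "p = (\<lambda>S. 1/2 * v S + 1/2 * hodge n v S)"
  define q where "q = (\<lambda>S. 1/2 * v S + (- 1/2) * hodge n v S)"
  have "p \<in> L" "q \<in> L"
    unfolding p_def q_def by (intro add scale v)+
  moreover have "hodge n p = p" "hodge n q = (\<lambda>S. - q S)"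
    unfolding p_def q_def hodge_lincomb invol by (simp_all add: fun_eq_iff)
  moreover have "v = (\<lambda>S. p S + q S)"
    by (simp add: p_def q_def fun_eq_iff)
  ultimately show ?thesis
    by blast
qed

lemma hodge_eigenspaces_inter:
  assumes "(\<lambda>S. 0) \<in> L"
  shows "{v \<in> L. hodge n v = v} \<inter> {v \<in> L. hodge n v = (\<lambda>S. - v S)} = {(\<lambda>S. 0)}"
proof
  show "{v \<in> L. hodge n v = v} \<inter> {v \<in> L. hodge n v = (\<lambda>S. - v S)} \<subseteq> {(\<lambda>S. 0)}"
  proof
    fix v
    assume "v \<in> {v \<in> L. hodge n v = v} \<inter> {v \<in> L. hodge n v = (\<lambda>S. - v S)}"
    then have "\<forall>S. v S = - v S"
      by (metis (mono_tags, lifting) IntD1 IntD2 mem_Collect_eq)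
    then show "v \<in> {(\<lambda>S. 0)}"
      by (simp add: fun_eq_iff)
  qed
  show "{(\<lambda>S. 0)} \<subseteq> {v \<in> L. hodge n v = v} \<inter> {v \<in> L. hodge n v = (\<lambda>S. - v S)}"
    using assms by (simp add: hodge_def fun_eq_iff)
qed

theorem lemma7p5:
  fixes m :: nat
    and Hk :: "nat \<Rightarrow> 'h::real_algebra_1 set"
    and \<Phi> :: "'h \<Rightarrow> mvec"
  assumes M: "closed_oriented_manifold_cohomology (4 * m) Hk"
    and Phi: "graded_alg_embedding (4 * m) Hk \<Phi>"
    and cl: "\<forall>a b. \<exists>c. \<Phi> c = clifford (4 * m) (\<Phi> a) (\<Phi> b)"
  defines "\<Lambda> \<equiv> \<Phi> ` Hk (2 * m)"
    and "\<Lambda>p \<equiv> {v \<in> \<Phi> ` Hk (2 * m). hodge (4 * m) v = v}"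
    and "\<Lambda>n \<equiv> {v \<in> \<Phi> ` Hk (2 * m). hodge (4 * m) v = (\<lambda>S. - v S)}"
  shows "(\<forall>v\<in>\<Lambda>. hodge (4 * m) v \<in> \<Lambda>)
       \<and> (\<forall>v\<in>\<Lambda>. \<exists>p\<in>\<Lambda>p. \<exists>q\<in>\<Lambda>n. v = (\<lambda>S. p S + q S))
       \<and> \<Lambda>p \<inter> \<Lambda>n = {(\<lambda>S. 0)}
       \<and> (\<forall>v\<in>\<Lambda>p. \<forall>v'\<in>\<Lambda>p. grade (2 * m) (clifford (4 * m) v v') \<in> \<Lambda>p)
       \<and> (\<forall>v\<in>\<Lambda>n. \<forall>v'\<in>\<Lambda>n. grade (2 * m) (clifford (4 * m) v v') \<in> \<Lambda>n)"
proof -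
  have \<Lambda>p: "\<Lambda>p = {v \<in> \<Lambda>. hodge (4 * m) v = v}"
    and \<Lambda>n: "\<Lambda>n = {v \<in> \<Lambda>. hodge (4 * m) v = (\<lambda>S. - v S)}"
    by (simp_all add: \<Lambda>_def \<Lambda>p_def \<Lambda>n_def)
  have k: "2 * m \<le> 4 * m" "4 * m - 2 * m = 2 * m"
    by simp_all
  have hom: "homogeneous (4 * m) (2 * m) v" if "v \<in> \<Lambda>" for v
    using Phi that unfolding \<Lambda>_def graded_alg_embedding_def by blast
  have star: "hodge (4 * m) v \<in> \<Lambda>" if "v \<in> \<Lambda>" for v
    using hodge_in_image[OF M Phi cl, of v "2 * m"] that k unfolding \<Lambda>_def by simp
  have invol: "hodge (4 * m) (hodge (4 * m) v) = v" if "v \<in> \<Lambda>" for v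
    using hodge_hodge[OF hom[OF that]] by simp
  have prod: "grade (2 * m) (clifford (4 * m) v w) \<in> \<Lambda>" if "v \<in> \<Lambda>" "w \<in> \<Lambda>" for v w
    using grade_clifford_in_image[OF M Phi cl _ _ k(1)] that unfolding \<Lambda>_def by blast
  have eigen: "hodge (4 * m) (grade (2 * m) (clifford (4 * m) v w))
      = (\<lambda>S. \<epsilon> * grade (2 * m) (clifford (4 * m) v w) S)"
    if "w \<in> \<Lambda>" "hodge (4 * m) w = (\<lambda>S. \<epsilon> * w S)" for v w \<epsilon>
    using hodge_grade_clifford_eigen[OF hom[OF that(1)] k(2) that(2)] .
  have "\<exists>p\<in>\<Lambda>p. \<exists>q\<in>\<Lambda>n. v = (\<lambda>S. p S + q S)" if "v \<in> \<Lambda>" for v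
    unfolding \<Lambda>p \<Lambda>n
    using that star[OF that] invol[OF that] add_in_image[OF M Phi] scale_in_image[OF M Phi]
    by (intro hodge_eigen_split) (simp_all add: \<Lambda>_def)
  moreover have "\<Lambda>p \<inter> \<Lambda>n = {(\<lambda>S. 0)}"
    unfolding \<Lambda>p \<Lambda>n using zero_in_image[OF M Phi] by (simp add: \<Lambda>_def hodge_eigenspaces_inter)
  moreover have "grade (2 * m) (clifford (4 * m) v w) \<in> \<Lambda>p" if "v \<in> \<Lambda>p" "w \<in> \<Lambda>p" for v w
    using that prod eigen[of w 1] unfolding \<Lambda>p by simp
  moreover have "grade (2 * m) (clifford (4 * m) v w) \<in> \<Lambda>n" if "v \<in> \<Lambda>n" "w \<in> \<Lambda>n" for v w
    using that prod eigen[of w "-1"] unfolding \<Lambda>n by simp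
  ultimately show ?thesis
    using star by blast
qed

end
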